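(* Let $d,\mathfrak d,\mathfrak L\in\mathbb N$, $L\in\mathbb R$, $u\in[-\infty,\infty)$, $v\in(u,\infty]$, let $D\subseteq\mathbb R^d$ be a set, let $f\colon D\to[u,v]\cap\mathbb R$ satisfy $|f(x)-f(y)|\le L\sum_{i=1}^d|x_i-y_i|$ for all $x,y\in D$, let $\mathcal M\subseteq D$ satisfy $|\mathcal M|\in\{2,3,\dots\}$, let $l=(l_0,\dots,l_{\mathfrak L})\in\mathbb N^{\mathfrak L+1}$ satisfy $\mathfrak L\ge|\mathcal M|+1$, $\sum_{i=1}^{\mathfrak L}l_i(l_{i-1}+1)\le\mathfrak d$, $l_0=d$, $l_{\mathfrak L}=1$, $l_1\ge 2d|\mathcal M|$, $l_k\ge 2|\mathcal M|-2k+3$ for all $k\in\{2,\dots,|\mathcal M|\}$, and $l_i\ge 2$ for all $i\in\mathbb N\cap(|\mathcal M|,\mathfrak L)$. Then there exists $\theta\in\mathbb R^{\mathfrak d}$ such that $\|\theta\|_\infty\le\max\{1,L,\sup_{z\in\mathcal M}\|z\|_\infty,2\sup_{z\in\mathcal M}|f(z)|\}$ and $$\sup_{x\in D}|f(x)-\mathscr N^{\theta,l}_{u,v}(x)|\le 2L\Bigl[\sup_{x\in D}\Bigl(\inf_{y\in\mathcal M}\sum_{i=1}^d|x_i-y_i|\Bigr)\Bigr].$$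
   Context: $\|\cdot\|_\infty$ is the maximum norm. For $r,s\in\mathbb N$, $k\in\mathbb N_0$, $\theta\in\mathbb R^{\mathfrak d}$ with $\mathfrak d\ge k+rs+r$, $\mathcal A^{\theta,k}_{r,s}\colon\mathbb R^s\to\mathbb R^r$ has $i$-th component $x\mapsto\sum_{j=1}^s\theta_{k+(i-1)s+j}x_j+\theta_{k+rs+i}$. $\mathfrak C_{u,v,n}$ applies $y\mapsto\max\{u,\min\{y,v\}\}$ componentwise on $\mathbb R^n$ and $\mathfrak R_n$ applies $y\mapsto\max\{y,0\}$ componentwise. For $l=(l_0,\dots,l_{\mathfrak L})$ with $\mathfrak d\ge\sum_kl_k(l_{k-1}+1)$ and $s_k=\sum_{j=1}^kl_j(l_{j-1}+1)$, $\mathscr N^{\theta,l}_{u,v}=\mathfrak C_{u,v,l_{\mathfrak L}}\circ\mathcal A^{\theta,s_{\mathfrak L-1}}_{l_{\mathfrak L},l_{\mathfrak L-1}}\circ\mathfrak R_{l_{\mathfrak L-1}}\circ\cdots\circ\mathfrak R_{l_1}\circ\mathcal A^{\theta,0}_{l_1,l_0}\colon\mathbb R^{l_0}\to\mathbb R^{l_{\mathfrak L}}$. *)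

theory Defs
  imports "HOL-Analysis.Analysis" "HOL-Library.Extended_Real"
begin

text \<open>Vectors in R^n are represented as functions nat => real, components indexed 1..n.
  The parameter vector theta in R^dd is a function nat => real, only entries 1..dd matter.\<close>

definition is_vec :: "nat \<Rightarrow> (nat \<Rightarrow> real) \<Rightarrow> bool" where
  "is_vec n x \<longleftrightarrow> (\<forall>i. i \<notin> {1..n} \<longrightarrow> x i = 0)"

definition affineA :: "(nat \<Rightarrow> real) \<Rightarrow> nat \<Rightarrow> nat \<Rightarrow> nat \<Rightarrow> (nat \<Rightarrow> real) \<Rightarrow> (nat \<Rightarrow> real)" where
  "affineA \<theta> k r s x = (\<lambda>i. if i \<in> {1..r}
      then (\<Sum>j=1..s. \<theta> (k + (i - 1) * s + j) * x j) + \<theta> (k + r * s + i) else 0)"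

definition reluR :: "nat \<Rightarrow> (nat \<Rightarrow> real) \<Rightarrow> (nat \<Rightarrow> real)" where
  "reluR n x = (\<lambda>i. if i \<in> {1..n} then max (x i) 0 else 0)"

definition clipC :: "ereal \<Rightarrow> ereal \<Rightarrow> nat \<Rightarrow> (nat \<Rightarrow> real) \<Rightarrow> (nat \<Rightarrow> real)" where
  "clipC u v n x = (\<lambda>i. if i \<in> {1..n} then real_of_ereal (max u (min (ereal (x i)) v)) else 0)"

definition sArch :: "nat list \<Rightarrow> nat \<Rightarrow> nat" where
  "sArch l k = (\<Sum>j=1..k. l ! j * (l ! (j - 1) + 1))"

fun netPre :: "(nat \<Rightarrow> real) \<Rightarrow> nat list \<Rightarrow> nat \<Rightarrow> (nat \<Rightarrow> real) \<Rightarrow> (nat \<Rightarrow> real)" where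
  "netPre \<theta> l 0 x = x"
| "netPre \<theta> l (Suc 0) x = affineA \<theta> 0 (l ! 1) (l ! 0) x"
| "netPre \<theta> l (Suc (Suc k)) x =
     affineA \<theta> (sArch l (Suc k)) (l ! Suc (Suc k)) (l ! Suc k)
       (reluR (l ! Suc k) (netPre \<theta> l (Suc k) x))"

definition realNN :: "(nat \<Rightarrow> real) \<Rightarrow> nat list \<Rightarrow> ereal \<Rightarrow> ereal \<Rightarrow> (nat \<Rightarrow> real) \<Rightarrow> (nat \<Rightarrow> real)" where
  "realNN \<theta> l u v x = clipC u v (l ! (length l - 1)) (netPre \<theta> l (length l - 1) x)"

definition linf :: "nat \<Rightarrow> (nat \<Rightarrow> real) \<Rightarrow> real" where
  "linf n x = Max ((\<lambda>i. \<bar>x i\<bar>) ` {1..n})"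

end

theory Submission
  imports Defs
begin

(* Enumerate M as z_1, ..., z_n. The network computes, and then clips to [u, v], the maximum of
   the tents g_t(x) = f(z_t) - L |x - z_t|_1. Since f is L-Lipschitz, f(x) - 2 L |x - z_t|_1 <= g_t(x)
   <= max_s g_s(x) <= f(x) for every t, and clipping to an interval containing f(x) does not
   increase the error.
   Layer 1 computes all +-(x_c - z_tc), so that layer 2 gets |x - z_t|_1 as a sum of ReLUs and
   outputs every g_t as a signed pair (g_t, -g_t), from which ReLU g - ReLU (-g) = g recovers it.
   Each of the layers 3, ..., n + 1 absorbs one more tent into the running maximum m via
   ReLU (m - g) + ReLU g - ReLU (-g) = max m g; the remaining layers carry the pair (m, -m).
   All weights are 0, +-1, +-L, coordinates of points of M or values of f on M. *)

section \<open>Packing layer weights into a parameter vector\<close>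

lemma sArch_Suc: "sArch l (Suc k) = sArch l k + l ! Suc k * (l ! k + 1)"
  unfolding sArch_def by simp

lemma sArch_block:
  assumes "1 \<le> k"
  shows "sArch l k = sArch l (k - 1) + l ! k * l ! (k - 1) + l ! k"
  using sArch_Suc[of l "k - 1"] assms by (simp add: algebra_simps)

lemma sArch_mono: "k \<le> k' \<Longrightarrow> sArch l k \<le> sArch l k'"
  unfolding sArch_def by (rule sum_mono2) auto

definition affine_layer ::
  "(nat \<Rightarrow> nat \<Rightarrow> real) \<Rightarrow> (nat \<Rightarrow> real) \<Rightarrow> nat \<Rightarrow> nat \<Rightarrow> (nat \<Rightarrow> real) \<Rightarrow> nat \<Rightarrow> real" where
  "affine_layer W B r s y = (\<lambda>i. if i \<in> {1..r} then (\<Sum>j=1..s. W i j * y j) + B i else 0)"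

lemma affine_layer_eqI:
  assumes "\<And>i. i \<in> {1..r} \<Longrightarrow> (\<Sum>j=1..s. W i j * y j) + B i = P i"
    and "\<And>i. i \<notin> {1..r} \<Longrightarrow> P i = 0"
  shows "affine_layer W B r s y = P"
  using assms unfolding affine_layer_def by auto

definition layer_index :: "nat list \<Rightarrow> nat \<Rightarrow> nat" where
  "layer_index l p = (LEAST k. p \<le> sArch l k)"

lemma layer_index_eq:
  assumes "sArch l (k - 1) < p" "p \<le> sArch l k"
  shows "layer_index l p = k"
  unfolding layer_index_def
proof (rule Least_equality)
  fix k' assume "p \<le> sArch l k'"
  with assms(1) have "\<not> k' \<le> k - 1"
    using sArch_mono[of k' "k - 1" l] by linarith
  then show "k \<le> k'" by simp
qed (fact assms(2))

text \<open>The inverse of the layout of \<^const>\<open>affineA\<close>: layer \<open>k\<close> owns the positions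
  \<open>{sArch l (k - 1) <.. sArch l k}\<close>, first its weights row by row, then its biases.\<close>

definition pack_params ::
  "nat list \<Rightarrow> (nat \<Rightarrow> nat \<Rightarrow> nat \<Rightarrow> real) \<Rightarrow> (nat \<Rightarrow> nat \<Rightarrow> real) \<Rightarrow> nat \<Rightarrow> real" where
  "pack_params l W B p =
     (let k = layer_index l p; s = l ! (k - 1); q = p - sArch l (k - 1) - 1
      in if q < l ! k * s then W k (q div s + 1) (q mod s + 1) else B k (q - l ! k * s + 1))"

lemma pack_params_bounded:
  "(\<And>k i j. \<bar>W k i j\<bar> \<le> b) \<Longrightarrow> (\<And>k i. \<bar>B k i\<bar> \<le> b) \<Longrightarrow> \<bar>pack_params l W B p\<bar> \<le> b"
  unfolding pack_params_def Let_def by simp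

lemma pack_params_weight:
  assumes "1 \<le> k" "i \<in> {1..l ! k}" "j \<in> {1..l ! (k - 1)}"
  shows "pack_params l W B (sArch l (k - 1) + (i - 1) * l ! (k - 1) + j) = W k i j"
proof -
  let ?s = "l ! (k - 1)"
  obtain i' j' where ij: "i = Suc i'" "j = Suc j'" and "i' < l ! k" "j' < ?s"
    using assms(2,3) by (cases i; cases j) auto
  have "i' * ?s + j' < Suc i' * ?s"
    using \<open>j' < ?s\<close> by simp
  also have "\<dots> \<le> l ! k * ?s"
    using \<open>i' < l ! k\<close> by (intro mult_le_mono1) simp
  finally have "i' * ?s + j' < l ! k * ?s" .
  moreover have "layer_index l (sArch l (k - 1) + (i - 1) * ?s + j) = k"
    using calculation sArch_block[OF assms(1), of l] ij by (intro layer_index_eq) auto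
  moreover have "(j' + i' * ?s) div ?s = i'" "(j' + i' * ?s) mod ?s = j'"
    using \<open>j' < ?s\<close> by simp_all
  ultimately show ?thesis
    unfolding pack_params_def Let_def ij by (simp add: add.commute)
qed

lemma pack_params_bias:
  assumes "1 \<le> k" "i \<in> {1..l ! k}"
  shows "pack_params l W B (sArch l (k - 1) + l ! k * l ! (k - 1) + i) = B k i"
proof -
  have "layer_index l (sArch l (k - 1) + l ! k * l ! (k - 1) + i) = k"
    using assms sArch_block[OF assms(1), of l] by (intro layer_index_eq) auto
  moreover obtain i' where "i = Suc i'"
    using assms(2) by (cases i) auto
  ultimately show ?thesis
    unfolding pack_params_def Let_def by simp
qed

lemma affineA_pack_params:
  assumes "1 \<le> k"
  shows "affineA (pack_params l W B) (sArch l (k - 1)) (l ! k) (l ! (k - 1))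
    = affine_layer (W k) (B k) (l ! k) (l ! (k - 1))"
  unfolding affineA_def affine_layer_def
  using pack_params_weight[OF assms] pack_params_bias[OF assms] by (intro ext) simp

lemma netPre_pack_params_1:
  "netPre (pack_params l W B) l 1 x = affine_layer (W 1) (B 1) (l ! 1) (l ! 0) x"
  using affineA_pack_params[of 1 l W B] by (simp add: sArch_def)

lemma netPre_pack_params_Suc:
  assumes "1 \<le> k"
  shows "netPre (pack_params l W B) l (Suc k) x
    = affine_layer (W (Suc k)) (B (Suc k)) (l ! Suc k) (l ! k)
        (reluR (l ! k) (netPre (pack_params l W B) l k x))"
  using assms affineA_pack_params[of "Suc k" l W B] by (cases k) auto

section \<open>Approximation by a clipped maximum of tents\<close>

lemma abs_diff_clip_le:
  fixes a y :: real
  assumes "u \<le> ereal a" "ereal a \<le> v"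
  shows "\<bar>a - real_of_ereal (max u (min (ereal y) v))\<bar> \<le> \<bar>a - y\<bar>"
  using assms by (cases u; cases v) (auto simp: max_def min_def abs_if)

lemma abs_diff_Max_tents_le:
  fixes a L :: real and c e :: "'t \<Rightarrow> real"
  assumes "finite T" "t \<in> T" and lip: "\<And>s. s \<in> T \<Longrightarrow> \<bar>a - c s\<bar> \<le> L * e s"
  shows "\<bar>a - Max ((\<lambda>s. c s - L * e s) ` T)\<bar> \<le> 2 * L * e t"
proof -
  have "c s - L * e s \<le> a" if "s \<in> T" for s
    using lip[OF that] by (simp add: abs_le_iff)
  then have "Max ((\<lambda>s. c s - L * e s) ` T) \<le> a"
    using assms(1,2) by (subst Max_le_iff) auto
  moreover have "c t - L * e t \<le> Max ((\<lambda>s. c s - L * e s) ` T)"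
    using assms(1,2) by (intro Max_ge) auto
  moreover have "a - c t \<le> L * e t"
    using lip[OF assms(2)] by simp
  ultimately show ?thesis
    by linarith
qed

lemma ereal_le_mult_INF_finite:
  fixes h :: "'a \<Rightarrow> real"
  assumes "finite M" "M \<noteq> {}" "0 \<le> c" "\<And>y. y \<in> M \<Longrightarrow> a \<le> c * h y"
  shows "ereal a \<le> ereal c * (INF y\<in>M. ereal (h y))"
proof -
  have "Min (h ` M) \<in> h ` M"
    using assms(1,2) by (intro Min_in) auto
  then obtain y0 where y0: "y0 \<in> M" "h y0 = Min (h ` M)"
    by auto
  have "(INF y\<in>M. ereal (h y)) = ereal (h y0)"
  proof (rule antisym)
    show "(INF y\<in>M. ereal (h y)) \<le> ereal (h y0)"
      using y0(1) by (rule INF_lower)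
    show "ereal (h y0) \<le> (INF y\<in>M. ereal (h y))"
      using y0(2) assms(1) by (auto intro: INF_greatest)
  qed
  then show ?thesis
    using assms(4)[OF y0(1)] by simp
qed

lemma SUP_le_mult_SUP:
  fixes e F :: "'a \<Rightarrow> ereal"
  assumes "0 \<le> c" "\<And>x. x \<in> D \<Longrightarrow> e x \<le> ereal c * F x"
  shows "(SUP x\<in>D. e x) \<le> ereal c * (SUP x\<in>D. F x)"
proof (rule SUP_least)
  fix x assume "x \<in> D"
  then have "F x \<le> (SUP x\<in>D. F x)"
    by (rule SUP_upper)
  then show "e x \<le> ereal c * (SUP x\<in>D. F x)"
    using assms \<open>x \<in> D\<close> by (meson ereal_less_eq(5) ereal_mult_left_mono order_trans)
qed

lemma lipschitz_const_nonneg: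
  assumes "x \<in> D" "y \<in> D" "x \<noteq> y" "\<forall>x\<in>D. is_vec d x"
    and "\<forall>x\<in>D. \<forall>y\<in>D. \<bar>f x - f y\<bar> \<le> L * (\<Sum>i=1..d. \<bar>x i - y i\<bar>)"
  shows "0 \<le> L"
proof -
  obtain i where i: "i \<in> {1..d}" "x i \<noteq> y i"
    using assms(1-4) unfolding is_vec_def by (metis ext)
  have "0 < \<bar>x i - y i\<bar>"
    using i(2) by simp
  also have "\<dots> \<le> (\<Sum>i=1..d. \<bar>x i - y i\<bar>)"
    using i(1) by (intro member_le_sum) auto
  finally have "0 < (\<Sum>i=1..d. \<bar>x i - y i\<bar>)" .
  moreover have "0 \<le> L * (\<Sum>i=1..d. \<bar>x i - y i\<bar>)"
    using assms(1,2,5) by (meson abs_ge_zero order_trans)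
  ultimately show ?thesis
    by (simp add: zero_le_mult_iff)
qed

section \<open>A ReLU network computing the maximum of the tents\<close>

lemma sum_reluR:
  "(\<Sum>j=1..m. W j * reluR m y j) = (\<Sum>j=1..m. W j * max (y j) 0)"
  by (rule sum.cong) (auto simp: reluR_def)

lemma relu_diff: "max a 0 - max (- a) 0 = (a :: real)"
  by (simp add: max_def)

definition kdelta :: "nat \<Rightarrow> nat \<Rightarrow> real" where
  "kdelta a j = (if j = a then 1 else 0)"

lemma sum_kdelta_mult [simp]:
  "finite A \<Longrightarrow> (\<Sum>j\<in>A. kdelta a j * R j) = (if a \<in> A then R a else 0)"
  by (simp add: kdelta_def if_distrib[of "\<lambda>c. c * R _"] cong: if_cong)

lemma sum_pairs:
  fixes a m :: nat
  shows "(\<Sum>j=a+1..a+2*m. h j) = (\<Sum>c=1..m. h (a + 2*c - 1) + h (a + 2*c))"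
proof (induction m)
  case (Suc m)
  have "{a+1..a + 2 * Suc m} = insert (a + 2*m + 2) (insert (a + 2*m + 1) {a+1..a + 2*m})"
    by auto
  then show ?case
    using Suc by (simp add: ac_simps)
qed simp

locale relu_max_net =
  fixes d n LL :: nat and l :: "nat list" and L :: real
    and z :: "nat \<Rightarrow> nat \<Rightarrow> real" and fz :: "nat \<Rightarrow> real"
  assumes d_pos: "1 \<le> d" and n_ge2: "2 \<le> n" and depth: "n < LL" and len: "length l = LL + 1"
    and l_0: "l ! 0 = d" and l_LL: "l ! LL = 1" and l_1: "2 * d * n \<le> l ! 1"
    and l_mid: "\<And>k. k \<in> {2..n} \<Longrightarrow> 2 * n + 3 - 2 * k \<le> l ! k"
    and l_tail: "\<And>k. n < k \<Longrightarrow> k < LL \<Longrightarrow> 2 \<le> l ! k"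
begin

definition dist1 :: "(nat \<Rightarrow> real) \<Rightarrow> nat \<Rightarrow> real" where
  "dist1 x t = (\<Sum>c=1..d. \<bar>x c - z t c\<bar>)"

definition tent :: "(nat \<Rightarrow> real) \<Rightarrow> nat \<Rightarrow> real" where
  "tent x t = fz t - L * dist1 x t"

definition tent_max :: "(nat \<Rightarrow> real) \<Rightarrow> nat \<Rightarrow> real" where
  "tent_max x k = Max (tent x ` {1..k})"

lemma tent_max_1: "tent_max x 1 = tent x 1"
  by (simp add: tent_max_def)

lemma tent_max_Suc: "1 \<le> k \<Longrightarrow> tent_max x (Suc k) = max (tent_max x k) (tent x (Suc k))"
  unfolding tent_max_def by (simp add: atLeastAtMostSuc_conv max.commute)

text \<open>Neuron \<open>i \<in> {1..2*d*n}\<close> of the first layer computes \<open>\<pm>(x\<^sub>c - z\<^sub>t\<^sub>c)\<close>, where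
  \<open>(i - 1) div 2 = d * (t - 1) + (c - 1)\<close> and the sign is given by the parity of \<open>i - 1\<close>.\<close>

definition point :: "nat \<Rightarrow> nat" where "point i = (i - 1) div 2 div d + 1"
definition coord :: "nat \<Rightarrow> nat" where "coord i = (i - 1) div 2 mod d + 1"

definition first_out :: "(nat \<Rightarrow> real) \<Rightarrow> nat \<Rightarrow> real" where
  "first_out x i =
     (if i \<in> {1..2*d*n} then (-1) ^ (i - 1) * (x (coord i) - z (point i) (coord i)) else 0)"

text \<open>Layer \<open>k \<in> {2..n}\<close> outputs the running maximum of the first \<open>k - 1\<close> tents minus the
  \<open>k\<close>-th tent, followed by the signed pairs \<open>(g\<^sub>t, -g\<^sub>t)\<close> of the tents \<open>t = k, ..., n\<close>;
  all later layers output \<open>(m, -m)\<close> for the maximum \<open>m\<close> of all tents, truncated to the layer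
  width.\<close>

definition mid_out :: "(nat \<Rightarrow> real) \<Rightarrow> nat \<Rightarrow> nat \<Rightarrow> real" where
  "mid_out x k i =
     (if i = 1 then tent_max x (k - 1) - tent x k
      else if i \<in> {2..2*n + 3 - 2*k} then (-1) ^ i * tent x (i div 2 + k - 1) else 0)"

definition tail_out :: "(nat \<Rightarrow> real) \<Rightarrow> nat \<Rightarrow> nat \<Rightarrow> real" where
  "tail_out x k i = (if i \<in> {1..min 2 (l ! k)} then (-1) ^ (i - 1) * tent_max x n else 0)"

definition layer_out :: "(nat \<Rightarrow> real) \<Rightarrow> nat \<Rightarrow> nat \<Rightarrow> real" where
  "layer_out x k = (if k = 1 then first_out x else if k \<le> n then mid_out x k else tail_out x k)"

definition block :: "nat \<Rightarrow> nat set" where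
  "block t = {2*d*(t - 1) + 1..2*d*(t - 1) + 2*d}"

definition W1 :: "nat \<Rightarrow> nat \<Rightarrow> real" where
  "W1 i j = (if i \<le> 2*d*n then (-1) ^ (i - 1) * kdelta (coord i) j else 0)"

definition B1 :: "nat \<Rightarrow> real" where
  "B1 i = (if i \<le> 2*d*n then (-1) ^ i * z (point i) (coord i) else 0)"

definition W2 :: "nat \<Rightarrow> nat \<Rightarrow> real" where
  "W2 i j =
     (if i = 1 then L * (of_bool (j \<in> block 2) - of_bool (j \<in> block 1))
      else if i \<in> {2..2*n - 1} then - ((-1) ^ i * L * of_bool (j \<in> block (i div 2 + 1))) else 0)"

definition B2 :: "nat \<Rightarrow> real" where
  "B2 i = (if i = 1 then fz 1 - fz 2 else if i \<in> {2..2*n - 1} then (-1) ^ i * fz (i div 2 + 1) else 0)"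

definition W_mid :: "nat \<Rightarrow> nat \<Rightarrow> nat \<Rightarrow> real" where
  "W_mid k i j =
     (if i = 1 then kdelta 1 j + kdelta 2 j - kdelta 3 j - kdelta 4 j + kdelta 5 j
      else if i \<in> {2..2*n + 3 - 2*k}
      then (-1) ^ i * (kdelta (2 * (i div 2) + 2) j - kdelta (2 * (i div 2) + 3) j) else 0)"

definition W_max :: "nat \<Rightarrow> nat \<Rightarrow> real" where
  "W_max i j = (if i \<in> {1..2} then (-1) ^ (i - 1) * (kdelta 1 j + kdelta 2 j - kdelta 3 j) else 0)"

definition W_tail :: "nat \<Rightarrow> nat \<Rightarrow> real" where
  "W_tail i j = (if i \<in> {1..2} then (-1) ^ (i - 1) * (kdelta 1 j - kdelta 2 j) else 0)"

definition net_weight :: "nat \<Rightarrow> nat \<Rightarrow> nat \<Rightarrow> real" where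
  "net_weight k = (if k = 1 then W1 else if k = 2 then W2 else if k \<le> n then W_mid k
           else if k = n + 1 then W_max else W_tail)"

definition net_bias :: "nat \<Rightarrow> nat \<Rightarrow> real" where
  "net_bias k = (if k = 1 then B1 else if k = 2 then B2 else (\<lambda>i. 0))"

lemma coord_range: "coord i \<in> {1..d}"
  using d_pos by (simp add: coord_def Suc_le_eq)

lemma point_range:
  assumes "i \<le> 2*d*n"
  shows "point i \<in> {1..n}"
proof -
  have "i - 1 < (n * d) * 2"
    using assms n_ge2 d_pos by (cases i) (auto simp: ac_simps)
  then have "(i - 1) div 2 < n * d"
    by (rule less_mult_imp_div_less)
  then show ?thesis
    unfolding point_def by (simp add: less_mult_imp_div_less Suc_le_eq)
qed

lemma layer_1: "affine_layer (net_weight 1) (net_bias 1) (l ! 1) (l ! 0) x = first_out x"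
proof (rule affine_layer_eqI)
  fix i assume i: "i \<in> {1..l ! 1}"
  show "(\<Sum>j=1..l ! 0. net_weight 1 i j * x j) + net_bias 1 i = first_out x i"
  proof (cases "i \<le> 2*d*n")
    case True
    have "(\<Sum>j=1..d. W1 i j * x j) = (-1) ^ (i - 1) * x (coord i)"
      using True coord_range[of i] by (simp add: W1_def mult.assoc sum_distrib_left[symmetric])
    moreover have "(-1) ^ i = - ((-1) ^ (i - 1) :: real)"
      using i by (cases i) auto
    ultimately show ?thesis
      using True i by (simp add: net_weight_def net_bias_def B1_def first_out_def l_0 algebra_simps)
  qed (simp add: net_weight_def net_bias_def W1_def B1_def first_out_def)
qed (use l_1 in \<open>auto simp: first_out_def\<close>)

lemma first_out_pair:
  assumes "t \<in> {1..n}" "c \<in> {1..d}"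
  shows "max (first_out x (2*d*(t - 1) + 2*c - 1)) 0 + max (first_out x (2*d*(t - 1) + 2*c)) 0
    = \<bar>x c - z t c\<bar>"
proof -
  obtain t' c' where tc: "t = Suc t'" "c = Suc c'" "c' < d" "t' < n"
    using assms by (cases t; cases c) auto
  define r where "r = d * t' + c'"
  have idx: "2*d*(t - 1) + 2*c - 1 = 2*r + 1" "2*d*(t - 1) + 2*c = 2*r + 2"
    unfolding r_def tc by simp_all
  have "r div d = t'" "r mod d = c'"
    using tc(3) unfolding r_def by simp_all
  then have pc: "point (2*r + 1) = t" "coord (2*r + 1) = c" "point (2*r + 2) = t" "coord (2*r + 2) = c"
    unfolding point_def coord_def tc by simp_all
  have "2*r + 2 \<le> 2*d*n"
  proof -
    have "r + 1 \<le> d * t' + d"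
      using tc(3) unfolding r_def by simp
    also have "\<dots> \<le> d * n"
      using tc(4) mult_le_mono2[of "Suc t'" n d] by simp
    finally show ?thesis by simp
  qed
  then have "first_out x (2*r + 1) = x c - z t c" "first_out x (2*r + 2) = - (x c - z t c)"
    using pc by (simp_all add: first_out_def)
  then show ?thesis
    unfolding idx by (simp add: max_def)
qed

lemma block_sum_first_out:
  assumes "t \<in> {1..n}"
  shows "(\<Sum>j=1..l ! 1. of_bool (j \<in> block t) * max (first_out x j) 0) = dist1 x t"
proof -
  let ?a = "2*d*(t - 1)"
  have "?a + 2*d \<le> 2*d*n"
    using assms mult_le_mono2[of t n "2*d"] by (cases t) auto
  then have sub: "block t \<subseteq> {1..l ! 1}"
    using l_1 unfolding block_def by auto
  have "(\<Sum>j=1..l ! 1. of_bool (j \<in> block t) * max (first_out x j) 0)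
      = (\<Sum>j\<in>{1..l ! 1}. if j \<in> block t then max (first_out x j) 0 else 0)"
    by (intro sum.cong) auto
  also have "\<dots> = (\<Sum>j\<in>block t. max (first_out x j) 0)"
    using sub by (simp add: sum.inter_restrict[symmetric] Int_absorb1)
  also have "\<dots> = (\<Sum>c=1..d. max (first_out x (?a + 2*c - 1)) 0 + max (first_out x (?a + 2*c)) 0)"
    unfolding block_def by (rule sum_pairs)
  also have "\<dots> = dist1 x t"
    unfolding dist1_def by (rule sum.cong[OF refl], rule first_out_pair[OF assms])
  finally show ?thesis .
qed

lemma W2_row:
  assumes "1 \<le> i"
  shows "(\<Sum>j=1..l ! 1. W2 i j * max (first_out x j) 0) + B2 i = mid_out x 2 i"
proof -
  let ?R = "\<lambda>j. max (first_out x j) 0" and ?\<beta> = "\<lambda>t j. of_bool (j \<in> block t) :: real"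
  consider "i = 1" | "i \<in> {2..2*n - 1}" | "2*n - 1 < i"
    using assms by force
  then show ?thesis
  proof cases
    case 1
    have "(\<Sum>j=1..l ! 1. W2 i j * ?R j)
        = L * (\<Sum>j=1..l ! 1. ?\<beta> 2 j * ?R j) - L * (\<Sum>j=1..l ! 1. ?\<beta> 1 j * ?R j)"
      unfolding 1 W2_def sum_distrib_left sum_subtractf[symmetric] by (simp add: algebra_simps)
    also have "\<dots> = L * dist1 x 2 - L * dist1 x 1"
      using block_sum_first_out[of 1 x] block_sum_first_out[of 2 x] n_ge2 by simp
    finally show ?thesis
      using 1 tent_max_1[of x] by (simp add: B2_def mid_out_def tent_def)
  next
    case 2
    let ?t = "i div 2 + 1"
    have t: "?t \<in> {1..n}"
      using 2 by auto
    have "(\<Sum>j=1..l ! 1. W2 i j * ?R j) = - ((-1) ^ i * L * (\<Sum>j=1..l ! 1. ?\<beta> ?t j * ?R j))"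
      using 2 unfolding W2_def sum_distrib_left sum_negf[symmetric] by (simp add: algebra_simps)
    also have "\<dots> = - ((-1) ^ i * L * dist1 x ?t)"
      using block_sum_first_out[OF t, of x] by simp
    finally show ?thesis
      using 2 n_ge2 by (simp add: B2_def mid_out_def tent_def algebra_simps)
  qed (use n_ge2 in \<open>auto simp: W2_def B2_def mid_out_def\<close>)
qed

lemma layer_2: "affine_layer (net_weight 2) (net_bias 2) (l ! 2) (l ! 1) (reluR (l ! 1) (first_out x)) = mid_out x 2"
proof (rule affine_layer_eqI)
  fix i assume "i \<in> {1..l ! 2}"
  then show "(\<Sum>j=1..l ! 1. net_weight 2 i j * reluR (l ! 1) (first_out x) j) + net_bias 2 i = mid_out x 2 i"
    unfolding sum_reluR using W2_row n_ge2 by (simp add: net_weight_def net_bias_def)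
qed (use l_mid[of 2] n_ge2 in \<open>auto simp: mid_out_def\<close>)

lemma mid_out_pair:
  assumes "q + k \<le> n"
  shows "max (mid_out x k (2*q + 2)) 0 - max (mid_out x k (2*q + 3)) 0 = tent x (q + k)"
proof -
  have "mid_out x k (2*q + 2) = tent x (q + k)" "mid_out x k (2*q + 3) = - tent x (q + k)"
    using assms by (simp_all add: mid_out_def)
  then show ?thesis
    by (simp add: relu_diff)
qed

lemma W_mid_row:
  assumes "2 \<le> k" "k < n" "1 \<le> i"
  shows "(\<Sum>j=1..l ! k. W_mid (Suc k) i j * max (mid_out x k j) 0) = mid_out x (Suc k) i"
proof -
  let ?R = "\<lambda>j. max (mid_out x k j) 0"
  have wide: "2*n + 3 - 2*k \<le> l ! k"
    using assms by (intro l_mid) auto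
  consider "i = 1" | "i \<in> {2..2*n + 1 - 2*k}" | "2*n + 1 - 2*k < i"
    using assms(3) by force
  then show ?thesis
  proof cases
    case 1
    have "5 \<le> l ! k"
      using wide assms by linarith
    then have "(\<Sum>j=1..l ! k. W_mid (Suc k) i j * ?R j) = ?R 1 + (?R 2 - ?R 3) - (?R 4 - ?R 5)"
      using 1 by (simp add: W_mid_def left_diff_distrib distrib_right sum.distrib sum_subtractf)
    moreover have "?R 2 - ?R 3 = tent x k"
      using mid_out_pair[of 0 k x, unfolded mult_0_right add_0] assms by simp
    moreover have "?R 4 - ?R 5 = tent x (Suc k)"
      using mid_out_pair[of 1 k x] assms by simp
    moreover have "?R 1 + tent x k = tent_max x k"
      using tent_max_Suc[of "k - 1" x] assms by (simp add: mid_out_def max_def)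
    moreover have "mid_out x (Suc k) i = tent_max x k - tent x (Suc k)"
      using 1 by (simp add: mid_out_def)
    ultimately show ?thesis
      by linarith
  next
    case 2
    let ?q = "i div 2"
    have q: "?q + k \<le> n"
      using 2 by auto
    then have "2*?q + 3 \<le> l ! k"
      using wide by linarith
    then have "(\<Sum>j=1..l ! k. W_mid (Suc k) i j * ?R j) = (-1) ^ i * (?R (2*?q + 2) - ?R (2*?q + 3))"
      using 2
      by (simp add: W_mid_def left_diff_distrib sum_subtractf sum_distrib_left[symmetric] mult.assoc)
    also have "\<dots> = (-1) ^ i * tent x (?q + k)"
      using mid_out_pair[OF q] by simp
    finally show ?thesis
      using 2 by (simp add: mid_out_def)
  next
    case 3
    then have "W_mid (Suc k) i j = 0" for j
      using assms by (auto simp: W_mid_def)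
    moreover have "mid_out x (Suc k) i = 0"
      using 3 assms by (auto simp: mid_out_def)
    ultimately show ?thesis
      by simp
  qed
qed

lemma layer_mid:
  assumes "2 \<le> k" "k < n"
  shows "affine_layer (net_weight (Suc k)) (net_bias (Suc k)) (l ! Suc k) (l ! k) (reluR (l ! k) (mid_out x k))
    = mid_out x (Suc k)"
proof (rule affine_layer_eqI)
  fix i assume "i \<in> {1..l ! Suc k}"
  then show "(\<Sum>j=1..l ! k. net_weight (Suc k) i j * reluR (l ! k) (mid_out x k) j) + net_bias (Suc k) i
      = mid_out x (Suc k) i"
    unfolding sum_reluR using W_mid_row[OF assms] assms by (simp add: net_weight_def net_bias_def)
next
  fix i assume "i \<notin> {1..l ! Suc k}"
  moreover have "2*n + 3 - 2 * Suc k \<le> l ! Suc k"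
    using assms by (intro l_mid) auto
  ultimately show "mid_out x (Suc k) i = 0"
    using assms by (auto simp: mid_out_def)
qed

lemma layer_max:
  "affine_layer (net_weight (Suc n)) (net_bias (Suc n)) (l ! Suc n) (l ! n) (reluR (l ! n) (mid_out x n))
    = tail_out x (Suc n)"
proof (rule affine_layer_eqI)
  fix i assume i: "i \<in> {1..l ! Suc n}"
  let ?R = "\<lambda>j. max (mid_out x n j) 0"
  have "3 \<le> l ! n"
    using l_mid[of n] n_ge2 by simp
  then have "(\<Sum>j=1..l ! n. (kdelta 1 j + kdelta 2 j - kdelta 3 j) * ?R j) = ?R 1 + (?R 2 - ?R 3)"
    by (simp add: left_diff_distrib distrib_right sum.distrib sum_subtractf)
  moreover have "?R 2 - ?R 3 = tent x n"
    using mid_out_pair[of 0 n x, unfolded mult_0_right add_0] by simp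
  moreover have "?R 1 + tent x n = tent_max x n"
    using tent_max_Suc[of "n - 1" x] n_ge2 by (simp add: mid_out_def max_def)
  moreover have "(\<Sum>j=1..l ! n. W_max i j * ?R j) = (if i \<in> {1..2}
      then (-1) ^ (i - 1) * (\<Sum>j=1..l ! n. (kdelta 1 j + kdelta 2 j - kdelta 3 j) * ?R j) else 0)"
    by (cases "i \<in> {1..2}") (auto simp: W_max_def sum_distrib_left mult.assoc)
  ultimately have "(\<Sum>j=1..l ! n. W_max i j * ?R j) = tail_out x (Suc n) i"
    using i by (simp add: tail_out_def)
  then show "(\<Sum>j=1..l ! n. net_weight (Suc n) i j * reluR (l ! n) (mid_out x n) j) + net_bias (Suc n) i
      = tail_out x (Suc n) i"
    unfolding sum_reluR using n_ge2 by (simp add: net_weight_def net_bias_def)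
qed (auto simp: tail_out_def)

lemma layer_tail:
  assumes "n < k" "Suc k \<le> LL"
  shows "affine_layer (net_weight (Suc k)) (net_bias (Suc k)) (l ! Suc k) (l ! k) (reluR (l ! k) (tail_out x k))
    = tail_out x (Suc k)"
proof (rule affine_layer_eqI)
  fix i assume i: "i \<in> {1..l ! Suc k}"
  let ?R = "\<lambda>j. max (tail_out x k j) 0"
  have "2 \<le> l ! k"
    using assms by (intro l_tail) auto
  then have "(\<Sum>j=1..l ! k. (kdelta 1 j - kdelta 2 j) * ?R j) = tent_max x n"
    by (simp add: left_diff_distrib sum_subtractf tail_out_def relu_diff)
  moreover have "(\<Sum>j=1..l ! k. W_tail i j * ?R j) = (if i \<in> {1..2}
      then (-1) ^ (i - 1) * (\<Sum>j=1..l ! k. (kdelta 1 j - kdelta 2 j) * ?R j) else 0)"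
    by (cases "i \<in> {1..2}") (auto simp: W_tail_def sum_distrib_left mult.assoc)
  ultimately have "(\<Sum>j=1..l ! k. W_tail i j * ?R j) = tail_out x (Suc k) i"
    using i by (simp add: tail_out_def)
  then show "(\<Sum>j=1..l ! k. net_weight (Suc k) i j * reluR (l ! k) (tail_out x k) j) + net_bias (Suc k) i
      = tail_out x (Suc k) i"
    unfolding sum_reluR using assms n_ge2 by (simp add: net_weight_def net_bias_def)
qed (auto simp: tail_out_def)

lemma layer_step:
  assumes "1 \<le> k" "k < LL"
  shows "affine_layer (net_weight (Suc k)) (net_bias (Suc k)) (l ! Suc k) (l ! k) (reluR (l ! k) (layer_out x k))
    = layer_out x (Suc k)"
proof -
  consider "k = 1" | "2 \<le> k" "k < n" | "k = n" | "n < k"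
    using assms by linarith
  then show ?thesis
  proof cases
    case 1
    then show ?thesis
      using layer_2 n_ge2 by (simp add: layer_out_def numeral_2_eq_2)
  next
    case 2
    then show ?thesis
      using layer_mid[OF 2] by (simp add: layer_out_def)
  next
    case 3
    then show ?thesis
      using layer_max n_ge2 by (simp add: layer_out_def)
  next
    case 4
    then show ?thesis
      using layer_tail[OF 4] assms n_ge2 by (simp add: layer_out_def)
  qed
qed

lemma netPre_pack_params_net:
  assumes "1 \<le> k" "k \<le> LL"
  shows "netPre (pack_params l net_weight net_bias) l k x = layer_out x k"
  using assms
proof (induction k rule: dec_induct)
  case base
  show ?case
    unfolding netPre_pack_params_1 layer_1 by (simp add: layer_out_def)
next
  case (step k)
  then show ?case
    using layer_step[of k x] by (simp add: netPre_pack_params_Suc)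
qed

lemma netPre_output: "netPre (pack_params l net_weight net_bias) l LL x 1 = tent_max x n"
  using netPre_pack_params_net[of LL x] depth l_LL n_ge2 by (simp add: layer_out_def tail_out_def)

lemma net_params_bounded:
  assumes "1 \<le> b" "0 \<le> L" "L \<le> b"
    and z: "\<And>t c. t \<in> {1..n} \<Longrightarrow> c \<in> {1..d} \<Longrightarrow> \<bar>z t c\<bar> \<le> b"
    and fz: "\<And>t. t \<in> {1..n} \<Longrightarrow> 2 * \<bar>fz t\<bar> \<le> b"
  shows "\<bar>pack_params l net_weight net_bias p\<bar> \<le> b"
proof (rule pack_params_bounded)
  have "\<bar>W1 i j\<bar> \<le> b" "\<bar>W_mid k i j\<bar> \<le> b" "\<bar>W_max i j\<bar> \<le> b" "\<bar>W_tail i j\<bar> \<le> b"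
    for k i j using assms(1) by (simp_all add: W1_def W_mid_def W_max_def W_tail_def kdelta_def abs_mult)
  moreover have "\<bar>W2 i j\<bar> \<le> b" for i j
  proof -
    have "\<bar>W2 i j\<bar> \<le> L"
      using assms(2) by (simp add: W2_def abs_mult)
    then show ?thesis
      using assms(3) by linarith
  qed
  ultimately show "\<bar>net_weight k i j\<bar> \<le> b" for k i j
    using n_ge2 by (simp add: net_weight_def)
  have "\<bar>B1 i\<bar> \<le> b" for i
    using assms(1) z[OF point_range coord_range] by (simp add: B1_def abs_mult)
  moreover have "\<bar>B2 i\<bar> \<le> b" for i
  proof -
    have "\<bar>fz 1 - fz 2\<bar> \<le> b"
      using fz[of 1] fz[of 2] n_ge2 by simp
    moreover have "\<bar>fz (i div 2 + 1)\<bar> \<le> b" if "i \<in> {2..2*n - 1}"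
    proof -
      have "i div 2 + 1 \<in> {1..n}"
        using that by auto
      then show ?thesis
        using fz assms(1) by fastforce
    qed
    ultimately show ?thesis
      using assms(1) by (simp add: B2_def abs_mult)
  qed
  ultimately show "\<bar>net_bias k i\<bar> \<le> b" for k i
    using assms(1) by (simp add: net_bias_def)
qed

lemma realNN_error:
  assumes "u \<le> ereal a" "ereal a \<le> v" "t \<in> {1..n}"
    and lip: "\<And>s. s \<in> {1..n} \<Longrightarrow> \<bar>a - fz s\<bar> \<le> L * dist1 x s"
  shows "\<bar>a - realNN (pack_params l net_weight net_bias) l u v x 1\<bar> \<le> 2 * L * dist1 x t"
proof -
  have "realNN (pack_params l net_weight net_bias) l u v x 1 = real_of_ereal (max u (min (ereal (tent_max x n)) v))"
    using netPre_output len l_LL by (simp add: realNN_def clipC_def)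
  then have "\<bar>a - realNN (pack_params l net_weight net_bias) l u v x 1\<bar> \<le> \<bar>a - tent_max x n\<bar>"
    using abs_diff_clip_le[OF assms(1,2)] by simp
  also have "\<dots> \<le> 2 * L * dist1 x t"
    unfolding tent_max_def tent_def by (rule abs_diff_Max_tents_le) (use assms(3) lip in auto)
  finally show ?thesis .
qed

lemma SUP_realNN_error_le:
  assumes M: "z ` {1..n} = M" "M \<subseteq> D" and "0 \<le> L" "fz = f \<circ> z"
    and range: "\<forall>x\<in>D. u \<le> ereal (f x) \<and> ereal (f x) \<le> v"
    and lip: "\<forall>x\<in>D. \<forall>y\<in>D. \<bar>f x - f y\<bar> \<le> L * (\<Sum>i=1..d. \<bar>x i - y i\<bar>)"
  shows "(SUP x\<in>D. ereal \<bar>f x - realNN (pack_params l net_weight net_bias) l u v x 1\<bar>)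
    \<le> ereal (2 * L) * (SUP x\<in>D. (INF y\<in>M. ereal (\<Sum>i=1..d. \<bar>x i - y i\<bar>)))"
proof (rule SUP_le_mult_SUP)
  fix x assume "x \<in> D"
  have "\<bar>f x - fz s\<bar> \<le> L * dist1 x s" if "s \<in> {1..n}" for s
  proof -
    have "z s \<in> D"
      using M that by auto
    then show ?thesis
      using lip \<open>x \<in> D\<close> \<open>fz = f \<circ> z\<close> unfolding dist1_def by simp
  qed
  then have "\<bar>f x - realNN (pack_params l net_weight net_bias) l u v x 1\<bar> \<le> 2 * L * dist1 x t"
    if "t \<in> {1..n}" for t
    using range \<open>x \<in> D\<close> that by (intro realNN_error) auto
  then have "\<bar>f x - realNN (pack_params l net_weight net_bias) l u v x 1\<bar> \<le> 2 * L * (\<Sum>i=1..d. \<bar>x i - y i\<bar>)"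
    if "y \<in> M" for y
    using M(1) that unfolding dist1_def by blast
  then show "ereal \<bar>f x - realNN (pack_params l net_weight net_bias) l u v x 1\<bar>
      \<le> ereal (2 * L) * (INF y\<in>M. ereal (\<Sum>i=1..d. \<bar>x i - y i\<bar>))"
    using M(1) n_ge2 \<open>0 \<le> L\<close> by (intro ereal_le_mult_INF_finite) auto
qed (use \<open>0 \<le> L\<close> in simp)

lemma pack_params_le_data_bound:
  assumes M: "z ` {1..n} = M" and "0 \<le> L" "fz = f \<circ> z"
  shows "\<bar>pack_params l net_weight net_bias p\<bar> \<le> max 1 (max L (max (Max (linf d ` M)) (2 * Max ((\<lambda>y. \<bar>f y\<bar>) ` M))))"
    (is "_ \<le> ?b")
proof (rule net_params_bounded)
  show "\<bar>z t c\<bar> \<le> ?b" if "t \<in> {1..n}" "c \<in> {1..d}" for t c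
  proof -
    have "\<bar>z t c\<bar> \<le> linf d (z t)"
      unfolding linf_def using that(2) by (intro Max_ge) auto
    also have "\<dots> \<le> Max (linf d ` M)"
      using M that(1) by (intro Max_ge) auto
    finally show ?thesis
      by simp
  qed
  show "2 * \<bar>fz t\<bar> \<le> ?b" if "t \<in> {1..n}" for t
  proof -
    have "\<bar>f (z t)\<bar> \<le> Max ((\<lambda>y. \<bar>f y\<bar>) ` M)"
      using M that by (intro Max_ge) auto
    then show ?thesis
      using \<open>fz = f \<circ> z\<close> by simp
  qed
qed (use \<open>0 \<le> L\<close> in auto)

end

theorem corollary3p8:
  fixes d dd LL :: nat and L :: real and u v :: ereal
    and D :: "(nat \<Rightarrow> real) set" and f :: "(nat \<Rightarrow> real) \<Rightarrow> real"
    and M :: "(nat \<Rightarrow> real) set" and l :: "nat list"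
  assumes "d \<ge> 1" and "dd \<ge> 1" and "LL \<ge> 1"
    and "u < \<infinity>" and "u < v"
    and "\<forall>x\<in>D. is_vec d x"
    and "\<forall>x\<in>D. u \<le> ereal (f x) \<and> ereal (f x) \<le> v"
    and "\<forall>x\<in>D. \<forall>y\<in>D. \<bar>f x - f y\<bar> \<le> L * (\<Sum>i=1..d. \<bar>x i - y i\<bar>)"
    and "M \<subseteq> D" and "finite M" and "card M \<ge> 2"
    and "length l = LL + 1" and "\<forall>i\<le>LL. l ! i \<ge> 1"
    and "LL \<ge> card M + 1"
    and "sArch l LL \<le> dd"
    and "l ! 0 = d" and "l ! LL = 1"
    and "l ! 1 \<ge> 2 * d * card M"
    and "\<forall>k\<in>{2..card M}. int (l ! k) \<ge> 2 * int (card M) - 2 * int k + 3"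
    and "\<forall>i. card M < i \<and> i < LL \<longrightarrow> l ! i \<ge> 2"
  shows "\<exists>\<theta> :: nat \<Rightarrow> real.
     (\<forall>i\<in>{1..dd}. \<bar>\<theta> i\<bar> \<le> max 1 (max L (max (Max (linf d ` M)) (2 * Max ((\<lambda>z. \<bar>f z\<bar>) ` M)))))
   \<and> (SUP x\<in>D. ereal \<bar>f x - realNN \<theta> l u v x 1\<bar>)
       \<le> ereal (2 * L) * (SUP x\<in>D. (INF y\<in>M. ereal (\<Sum>i=1..d. \<bar>x i - y i\<bar>)))"
proof -
  define n where "n = card M"
  obtain z where "bij_betw z {1..n} M"
    using ex_bij_betw_nat_finite_1[OF assms(10)] unfolding n_def by blast
  then have M: "z ` {1..n} = M"
    by (simp add: bij_betw_def)
  obtain y1 y2 where "y1 \<in> M" "y2 \<in> M" "y1 \<noteq> y2"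
    using assms(10,11) card_le_Suc0_iff_eq[OF assms(10)] by fastforce
  then have L: "0 \<le> L"
    using assms(6,8,9) by (intro lipschitz_const_nonneg) auto
  have "2 * n + 3 - 2 * k \<le> l ! k" if "k \<in> {2..n}" for k
    using assms(19) that unfolding n_def by force
  then interpret relu_max_net d n LL l L z "f \<circ> z"
    using assms unfolding n_def by unfold_locales auto
  show ?thesis
    using pack_params_le_data_bound[OF M L refl] SUP_realNN_error_le[OF M assms(9) L refl assms(7,8)]
    by blast
qed

end
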